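(* Let $n\ge 3$ and $\Delta,\Delta'\in\mathcal{P}_n$. If there exists $i\in\mathbb{Z}_n$ with $lab_\Delta((i,i-1))\neq lab_{\Delta'}((i,i-1))$, then $f^{(\Delta)}_{8,n}\neq f^{(\Delta')}_{8,n}$.
   Context: Cells are indexed by $\mathbb{Z}_n=\{0,\dots,n-1\}$, indices modulo $n$. Rule $8$ has local rule $r_8(x_1,x_2,x_3)=\neg x_1\wedge x_2\wedge x_3$ and global function $f_{8,n}(x)_i=r_8(x_{i-1},x_i,x_{i+1})$. An update schedule is an ordered partition $\Delta=(\Delta_1,\dots,\Delta_k)$ of $\mathbb{Z}_n$ into nonempty blocks; $\mathcal{P}_n$ is the set of them. For a block $B$ let $f^{(B)}(x)_i=f_{8,n}(x)_i$ if $i\in B$ and $x_i$ otherwise; $f^{(\Delta)}_{8,n}=f^{(\Delta_k)}\circ\cdots\circ f^{(\Delta_1)}$. (The paper states the conclusion as inequality of the transition digraphs with arcs $(x,f^{(\Delta)}_{8,n}(x))$, equivalent to inequality of the maps.) For $u,v\in\mathbb{Z}_n$ with $u\in\Delta_a$, $v\in\Delta_b$, $lab_\Delta((u,v))=\oplus$ if $b\le a$ and $\ominus$ if $a<b$. *)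

theory Defs
  imports Main
begin

text \<open>Cells are 0..n-1; a configuration is x :: nat \<Rightarrow> bool, only values at i < n matter.\<close>

definition config :: "nat \<Rightarrow> (nat \<Rightarrow> bool) set" where
  "config n = {x. \<forall>i\<ge>n. \<not> x i}"

definition r8 :: "bool \<Rightarrow> bool \<Rightarrow> bool \<Rightarrow> bool" where
  "r8 x1 x2 x3 = (\<not> x1 \<and> x2 \<and> x3)"

definition f8 :: "nat \<Rightarrow> (nat \<Rightarrow> bool) \<Rightarrow> (nat \<Rightarrow> bool)" where
  "f8 n x = (\<lambda>i. if i < n then r8 (x ((i + n - 1) mod n)) (x i) (x ((i + 1) mod n)) else x i)"

definition block_update :: "nat \<Rightarrow> nat set \<Rightarrow> (nat \<Rightarrow> bool) \<Rightarrow> (nat \<Rightarrow> bool)" where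
  "block_update n B x = (\<lambda>i. if i \<in> B then f8 n x i else x i)"

text \<open>Ordered partition (\<Delta>_1,...,\<Delta>_k) as a list of blocks (list position 0 = \<Delta>_1).\<close>
definition update_schedule :: "nat \<Rightarrow> nat set list \<Rightarrow> bool" where
  "update_schedule n D \<longleftrightarrow>
     (\<forall>B\<in>set D. B \<noteq> {}) \<and>
     (\<forall>a<length D. \<forall>b<length D. a \<noteq> b \<longrightarrow> D ! a \<inter> D ! b = {}) \<and>
     \<Union> (set D) = {0..<n}"

text \<open>f^(\<Delta>) = f^(\<Delta>_k) o ... o f^(\<Delta>_1): apply blocks in list order.\<close>
definition sched_update :: "nat \<Rightarrow> nat set list \<Rightarrow> (nat \<Rightarrow> bool) \<Rightarrow> (nat \<Rightarrow> bool)" where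
  "sched_update n D x = fold (block_update n) D x"

definition block_idx :: "nat set list \<Rightarrow> nat \<Rightarrow> nat" where
  "block_idx D u = (THE a. a < length D \<and> u \<in> D ! a)"

text \<open>lab((u,v)) = True for \<oplus> (b \<le> a), False for \<ominus> (a < b).\<close>
definition lab :: "nat set list \<Rightarrow> nat \<Rightarrow> nat \<Rightarrow> bool" where
  "lab D u v \<longleftrightarrow> block_idx D v \<le> block_idx D u"

end

theory Submission
  imports Defs
begin

text \<open>Start from the configuration whose only live cells are i and its left neighbour p = i - 1.
  Rule 8 can only switch cells off, and cell p is updated exactly once, with its own left
  neighbour dead and itself still alive; so it survives iff cell i is still alive at that moment,
  i.e. iff i has not been updated strictly before p. But if i was updated strictly before p, it died
  then, because its left neighbour p was alive. Hence the final value of p is lab((i, p)), and two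
  schedules with different labels on the arc (i, p) disagree on this configuration.\<close>

lemma block_update_in [simp]: "j \<in> B \<Longrightarrow> block_update n B x j = f8 n x j"
  by (simp add: block_update_def)

lemma block_update_notin [simp]: "j \<notin> B \<Longrightarrow> block_update n B x j = x j"
  by (simp add: block_update_def)

lemma f8_imp: "f8 n x j \<Longrightarrow> x j"
  by (auto simp: f8_def r8_def split: if_splits)

lemma fold_block_update_imp: "fold (block_update n) Bs x j \<Longrightarrow> x j"
proof (induction Bs arbitrary: x)
  case (Cons B Bs)
  then have "block_update n B x j" by simp
  then show ?case by (cases "j \<in> B") (auto dest: f8_imp)
qed simp

lemma fold_take_Suc:
  "k < length D \<Longrightarrow> fold f (take (Suc k) D) x = f (D ! k) (fold f (take k D) x)"
  by (simp add: take_Suc_conv_app_nth)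

lemma
  assumes "update_schedule n D" "j < n"
  shows block_idx_less_length: "block_idx D j < length D"
    and mem_block_iff: "c < length D \<Longrightarrow> j \<in> D ! c \<longleftrightarrow> c = block_idx D j"
proof -
  have cover: "\<Union> (set D) = {0..<n}"
    and disj: "\<forall>a<length D. \<forall>b<length D. a \<noteq> b \<longrightarrow> D ! a \<inter> D ! b = {}"
    using assms(1) unfolding update_schedule_def by simp_all
  obtain a where a: "a < length D" "j \<in> D ! a"
    using assms(2) cover by (metis UnionE atLeastLessThan_iff in_set_conv_nth zero_le)
  have unique: "c = a" if "c < length D" "j \<in> D ! c" for c
    using disj that a by blast
  have "block_idx D j = a"
    unfolding block_idx_def using a unique by blast
  then show "block_idx D j < length D" "c < length D \<Longrightarrow> j \<in> D ! c \<longleftrightarrow> c = block_idx D j"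
    using a unique by blast+
qed

lemma fold_take_before_block:
  assumes "update_schedule n D" "j < n" "k \<le> block_idx D j"
  shows "fold (block_update n) (take k D) x j = x j"
  using assms(3)
proof (induction k)
  case (Suc k)
  have k: "k < length D"
    using Suc.prems block_idx_less_length[OF assms(1,2)] by linarith
  then have "j \<notin> D ! k"
    using Suc.prems mem_block_iff[OF assms(1,2)] by simp
  then show ?case
    unfolding fold_take_Suc[OF k] using Suc by simp
qed simp

lemma fold_take_after_block:
  assumes "update_schedule n D" "j < n" "block_idx D j < k"
  shows "fold (block_update n) (take k D) x j
           = f8 n (fold (block_update n) (take (block_idx D j) D) x) j"
proof -
  have "Suc (block_idx D j) \<le> k" using assms(3) by simp
  then show ?thesis
  proof (induction k rule: dec_induct)
    case base
    have b: "block_idx D j < length D"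
      using block_idx_less_length[OF assms(1,2)] .
    then have "j \<in> D ! block_idx D j"
      using mem_block_iff[OF assms(1,2)] by simp
    then show ?case
      unfolding fold_take_Suc[OF b] by simp
  next
    case (step k)
    show ?case
    proof (cases "k < length D")
      case True
      then have "j \<notin> D ! k"
        using step.hyps mem_block_iff[OF assms(1,2)] by simp
      then show ?thesis
        unfolding fold_take_Suc[OF True] using step.IH by simp
    next
      case False
      then show ?thesis using step.IH by simp
    qed
  qed
qed

lemma sched_update_eq_block_value:
  assumes "update_schedule n D" "j < n"
  shows "sched_update n D x j = f8 n (fold (block_update n) (take (block_idx D j) D) x) j"
  using fold_take_after_block[OF assms block_idx_less_length[OF assms]]
  by (simp add: sched_update_def)

lemma left_neighbour_eq:
  fixes n i :: nat
  assumes "i < n"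
  shows "(i + n - 1) mod n = (if i = 0 then n - 1 else i - 1)"
proof (cases i)
  case (Suc k)
  then have "i + n - 1 = k + n" by simp
  then show ?thesis using Suc assms by simp
qed (use assms in simp)

lemma left_neighbours_distinct:
  fixes n i :: nat
  assumes "n \<ge> 3" "i < n"
  defines "p \<equiv> (i + n - 1) mod n"
  shows "p < n" "p \<noteq> i" "(p + 1) mod n = i"
    and "(p + n - 1) mod n \<noteq> i" "(p + n - 1) mod n \<noteq> p"
proof -
  have p: "p = (if i = 0 then n - 1 else i - 1)"
    using assms(2) unfolding p_def by (rule left_neighbour_eq)
  then show "p < n" using assms(2) by auto
  then have "(p + n - 1) mod n = (if p = 0 then n - 1 else p - 1)"
    by (rule left_neighbour_eq)
  then show "p \<noteq> i" "(p + 1) mod n = i" "(p + n - 1) mod n \<noteq> i" "(p + n - 1) mod n \<noteq> p"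
    using p assms(1,2) by auto
qed

lemma sched_update_left_neighbour_eq_lab:
  fixes n i :: nat
  assumes n: "n \<ge> 3" and i: "i < n" and D: "update_schedule n D"
  defines "p \<equiv> (i + n - 1) mod n"
  defines "x \<equiv> (\<lambda>j. j < n \<and> (j = i \<or> j = p))"
  shows "sched_update n D x p = lab D i p"
proof -
  note nb = left_neighbours_distinct[OF n i, folded p_def]
  let ?q = "(p + n - 1) mod n"
  define a where "a = block_idx D p"
  define s where "s = fold (block_update n) (take a D) x"
  have final: "sched_update n D x p = r8 (s ?q) (s p) (s i)"
    using sched_update_eq_block_value[OF D nb(1)] nb by (simp add: f8_def s_def a_def)
  have "\<not> s ?q"
    using fold_block_update_imp[of n "take a D" x ?q] nb unfolding s_def x_def by auto
  moreover have "s p"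
    using fold_take_before_block[OF D nb(1)] nb(1) unfolding s_def a_def x_def by simp
  moreover have "s i \<longleftrightarrow> a \<le> block_idx D i"
  proof (cases "a \<le> block_idx D i")
    case True
    then show ?thesis
      using fold_take_before_block[OF D i] i unfolding s_def x_def by simp
  next
    case False
    have "fold (block_update n) (take (block_idx D i) D) x p"
      using False fold_take_before_block[OF D nb(1)] nb(1) unfolding a_def x_def by simp
    then show ?thesis
      using False fold_take_after_block[OF D i] i unfolding s_def
      by (simp add: f8_def r8_def p_def)
  qed
  ultimately show ?thesis
    using final by (simp add: r8_def lab_def a_def)
qed

theorem mainTheorem14:
  fixes n :: nat and D D' :: "nat set list"
  assumes "n \<ge> 3"
    and "update_schedule n D" and "update_schedule n D'"
    and "\<exists>i<n. lab D i ((i + n - 1) mod n) \<noteq> lab D' i ((i + n - 1) mod n)"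
  shows "\<exists>x\<in>config n. sched_update n D x \<noteq> sched_update n D' x"
proof -
  obtain i where i: "i < n" "lab D i ((i + n - 1) mod n) \<noteq> lab D' i ((i + n - 1) mod n)"
    using assms(4) by blast
  define x where "x = (\<lambda>j. j < n \<and> (j = i \<or> j = (i + n - 1) mod n))"
  have "x \<in> config n"
    by (simp add: config_def x_def)
  moreover have "sched_update n D x \<noteq> sched_update n D' x"
    using sched_update_left_neighbour_eq_lab[OF assms(1) i(1), folded x_def] assms(2,3) i(2)
    by metis
  ultimately show ?thesis by blast
qed

end
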